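(* Let $p<1$, let $k$ be an integer, and let $Y$ be the number of vertices of degree at most $k$ in $\mathcal G(n,p)$. Then $\operatorname{Var}(Y)\le(\mathbb E Y)^2\big(p/(1-p)+1/\mathbb E Y\big)$.
   Context: $\mathcal G(n,p)$ is the Erdős–Rényi random graph on $[n]$, each edge present independently with probability $p$. *)

theory Defs
  imports "HOL-Probability.Probability"
begin

text \<open>Vertex set [n] is represented as {0..<n}. Potential edges are pairs (i,j) with i<j<n.\<close>
definition gnp_edges :: "nat \<Rightarrow> (nat \<times> nat) set" where
  "gnp_edges n = {(i, j). i < j \<and> j < n}"

definition gnp :: "nat \<Rightarrow> real \<Rightarrow> (nat \<times> nat \<Rightarrow> bool) pmf" where
  "gnp n p = Pi_pmf (gnp_edges n) False (\<lambda>_. bernoulli_pmf p)"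

definition adj :: "(nat \<times> nat \<Rightarrow> bool) \<Rightarrow> nat \<Rightarrow> nat \<Rightarrow> bool" where
  "adj G u v = (u \<noteq> v \<and> G (min u v, max u v))"

definition degree :: "nat \<Rightarrow> (nat \<times> nat \<Rightarrow> bool) \<Rightarrow> nat \<Rightarrow> nat" where
  "degree n G v = card {u. u < n \<and> adj G u v}"

definition num_low_deg :: "nat \<Rightarrow> int \<Rightarrow> (nat \<times> nat \<Rightarrow> bool) \<Rightarrow> real" where
  "num_low_deg n k G = real (card {v. v < n \<and> int (degree n G v) \<le> k})"

end

theory Submission imports Defs begin

text \<open>
  Write \<open>Y\<close> as the sum of the indicators of the events \<open>A\<^sub>v = [deg v \<le> k]\<close>, so that
  \<open>Var Y = \<Sum>\<^sub>u\<^sub>,\<^sub>v P(A\<^sub>u \<and> A\<^sub>v) - (E Y)\<^sup>2\<close> and the diagonal terms add up to \<open>E Y\<close>.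
  For \<open>u \<noteq> v\<close>, condition on the edge \<open>uv\<close>: the numbers of neighbours of \<open>u\<close> and of \<open>v\<close>
  outside \<open>{u, v}\<close> are functions of disjoint sets of edges, hence independent. If \<open>a \<ge> b\<close> are the
  probabilities that the first one is at most \<open>k\<close> resp. \<open>k - 1\<close>, and \<open>c \<ge> d\<close> those of the second, then
  \<open>(1 - p) P(A\<^sub>u \<and> A\<^sub>v) = (1 - p) (p b d + (1 - p) a c) \<le> (p b + (1 - p) a) (p d + (1 - p) c) = P(A\<^sub>u) P(A\<^sub>v)\<close>.
  Summing over all pairs gives \<open>Var Y \<le> (1/(1 - p) - 1) (E Y)\<^sup>2 + E Y\<close>.
\<close>

definition depends_only_on :: "'a set \<Rightarrow> (('a \<Rightarrow> 'b) \<Rightarrow> bool) \<Rightarrow> bool" where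
  "depends_only_on A X \<longleftrightarrow> (\<forall>f g. (\<forall>x\<in>A. f x = g x) \<longrightarrow> X f = X g)"

lemma depends_only_onD: "depends_only_on A X \<Longrightarrow> (\<And>x. x \<in> A \<Longrightarrow> f x = g x) \<Longrightarrow> X f = X g"
  unfolding depends_only_on_def by blast

lemma depends_only_on_mono: "depends_only_on A X \<Longrightarrow> A \<subseteq> B \<Longrightarrow> depends_only_on B X"
  unfolding depends_only_on_def by blast

lemma depends_only_on_True: "depends_only_on A (\<lambda>_. True)"
  unfolding depends_only_on_def by blast

lemma depends_only_on_component: "depends_only_on {e} (\<lambda>f. P (f e))"
  unfolding depends_only_on_def by auto

lemma depends_only_on_conj:
  "depends_only_on A X \<Longrightarrow> depends_only_on B Y \<Longrightarrow> depends_only_on (A \<union> B) (\<lambda>f. X f \<and> Y f)"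
  unfolding depends_only_on_def by (metis UnCI)

lemma prob_pair_pmf_Times:
  "measure_pmf.prob (pair_pmf M N) (A \<times> B) = measure_pmf.prob M A * measure_pmf.prob N B"
proof -
  have "measure_pmf.prob (pair_pmf M N) (A \<times> B)
      = measure_pmf.prob (pair_pmf M N) ((A \<inter> set_pmf M) \<times> (B \<inter> set_pmf N))"
    by (subst measure_Int_set_pmf[symmetric]) (auto intro: arg_cong[where f = "measure _"])
  also have "\<dots> = measure_pmf.prob M (A \<inter> set_pmf M) * measure_pmf.prob N (B \<inter> set_pmf N)"
    by (rule measure_pmf_prob_product) auto
  finally show ?thesis by (simp add: measure_Int_set_pmf)
qed

lemma prob_Pi_pmf_union_conj:
  assumes "finite A" "finite B" "A \<inter> B = {}" "depends_only_on A X" "depends_only_on B Y"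
  shows "measure_pmf.prob (Pi_pmf (A \<union> B) dflt q) {f. X f \<and> Y f}
       = measure_pmf.prob (Pi_pmf A dflt q) {f. X f} * measure_pmf.prob (Pi_pmf B dflt q) {f. Y f}"
proof -
  have "X (\<lambda>x. if x \<in> A then f x else g x) = X f" for f g
    by (rule depends_only_onD[OF assms(4)]) simp
  moreover have "Y (\<lambda>x. if x \<in> A then f x else g x) = Y g" for f g
    by (rule depends_only_onD[OF assms(5)]) (use assms(3) in auto)
  ultimately have "(\<lambda>(f, g) x. if x \<in> A then f x else g x) -` {f. X f \<and> Y f} = {f. X f} \<times> {g. Y g}"
    by auto
  then show ?thesis
    using assms by (simp add: Pi_pmf_union prob_pair_pmf_Times)
qed

lemma prob_Pi_pmf_indep:
  assumes "finite E" "A \<subseteq> E" "B \<subseteq> E" "A \<inter> B = {}"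
    and "depends_only_on A X" "depends_only_on B Y"
  shows "measure_pmf.prob (Pi_pmf E dflt q) {f. X f \<and> Y f}
       = measure_pmf.prob (Pi_pmf E dflt q) {f. X f} * measure_pmf.prob (Pi_pmf E dflt q) {f. Y f}"
proof -
  have split: "E = A \<union> (E - A)" using assms by auto
  have fin: "finite A" "finite (E - A)" using assms finite_subset by auto
  have Y: "depends_only_on (E - A) Y" using assms by (auto intro: depends_only_on_mono)
  have "measure_pmf.prob (Pi_pmf E dflt q) {f. X' f \<and> Y' f}
      = measure_pmf.prob (Pi_pmf A dflt q) {f. X' f} * measure_pmf.prob (Pi_pmf (E - A) dflt q) {f. Y' f}"
    if "depends_only_on A X'" "depends_only_on (E - A) Y'" for X' Y'
    by (subst split, rule prob_Pi_pmf_union_conj) (use fin that in auto)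
  from this[of X Y] this[of X "\<lambda>_. True"] this[of "\<lambda>_. True" Y] show ?thesis
    by (simp add: assms(5) Y depends_only_on_True)
qed

lemma finite_gnp_edges: "finite (gnp_edges n)"
  by (rule finite_subset[of _ "{..<n} \<times> {..<n}"]) (auto simp: gnp_edges_def)

lemma prob_gnp_edge:
  assumes "0 \<le> p" "p \<le> 1" "e \<in> gnp_edges n"
  shows "measure_pmf.prob (gnp n p) {G. G e} = p"
proof -
  have "map_pmf (\<lambda>G. G e) (gnp n p) = bernoulli_pmf p"
    using assms by (simp add: gnp_def Pi_pmf_component finite_gnp_edges)
  then have "measure_pmf.prob (map_pmf (\<lambda>G. G e) (gnp n p)) {True} = p"
    using assms by (simp add: measure_pmf_single)
  then show ?thesis by (simp add: vimage_def)
qed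

lemma prob_gnp_indep:
  assumes "A \<subseteq> gnp_edges n" "B \<subseteq> gnp_edges n" "A \<inter> B = {}"
    and "depends_only_on A X" "depends_only_on B Y"
  shows "measure_pmf.prob (gnp n p) {G. X G \<and> Y G}
       = measure_pmf.prob (gnp n p) {G. X G} * measure_pmf.prob (gnp n p) {G. Y G}"
  unfolding gnp_def by (rule prob_Pi_pmf_indep) (use assms finite_gnp_edges in auto)

lemma prob_gnp_edge_cases:
  assumes "0 \<le> p" "p \<le> 1" "e \<in> gnp_edges n" "D \<subseteq> gnp_edges n" "e \<notin> D"
    and "depends_only_on D R1" "depends_only_on D R2"
  shows "measure_pmf.prob (gnp n p) {G. (G e \<and> R1 G) \<or> (\<not> G e \<and> R2 G)}
       = p * measure_pmf.prob (gnp n p) {G. R1 G} + (1 - p) * measure_pmf.prob (gnp n p) {G. R2 G}"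
proof -
  let ?P = "measure_pmf.prob (gnp n p)"
  have "?P {G. (G e \<and> R1 G) \<or> (\<not> G e \<and> R2 G)} = ?P ({G. G e \<and> R1 G} \<union> {G. \<not> G e \<and> R2 G})"
    by (rule arg_cong[where f = ?P]) auto
  also have "\<dots> = ?P {G. G e \<and> R1 G} + ?P {G. \<not> G e \<and> R2 G}"
    by (rule measure_pmf.finite_measure_Union) auto
  also have "?P {G. G e \<and> R1 G} = ?P {G. G e} * ?P {G. R1 G}"
    by (rule prob_gnp_indep[of "{e}" _ D]) (use assms depends_only_on_component in auto)
  also have "?P {G. \<not> G e \<and> R2 G} = ?P {G. \<not> G e} * ?P {G. R2 G}"
    by (rule prob_gnp_indep[of "{e}" _ D]) (use assms depends_only_on_component in auto)
  also have "?P {G. \<not> G e} = 1 - p"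
    using measure_pmf.prob_compl[of "{G. G e}" "gnp n p"] prob_gnp_edge[OF assms(1-3)]
    by (simp add: Collect_neg_eq Compl_eq_Diff_UNIV)
  finally show ?thesis
    using assms by (simp add: prob_gnp_edge)
qed

definition degree_except :: "nat \<Rightarrow> (nat \<times> nat \<Rightarrow> bool) \<Rightarrow> nat \<Rightarrow> nat \<Rightarrow> nat" where
  "degree_except n G u v = card {w. w < n \<and> w \<noteq> v \<and> adj G w u}"

definition edges_at_except :: "nat \<Rightarrow> nat \<Rightarrow> nat \<Rightarrow> (nat \<times> nat) set" where
  "edges_at_except n u v = {e \<in> gnp_edges n. e \<noteq> (min u v, max u v) \<and> (fst e = u \<or> snd e = u)}"

lemma edges_at_except_subset: "edges_at_except n u v \<subseteq> gnp_edges n"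
  by (auto simp: edges_at_except_def)

lemma edges_at_except_disjoint: "u \<noteq> v \<Longrightarrow> edges_at_except n u v \<inter> edges_at_except n v u = {}"
  by (auto simp: edges_at_except_def gnp_edges_def min_def max_def)

lemma edge_notin_edges_at_except:
  "(min u v, max u v) \<notin> edges_at_except n u v" "(min u v, max u v) \<notin> edges_at_except n v u"
  by (auto simp: edges_at_except_def min_def max_def)

lemma edge_in_gnp_edges: "u \<noteq> v \<Longrightarrow> u < n \<Longrightarrow> v < n \<Longrightarrow> (min u v, max u v) \<in> gnp_edges n"
  by (auto simp: gnp_edges_def min_def max_def)

lemma degree_eq_degree_except:
  assumes "u \<noteq> v" "v < n"
  shows "degree n G u = degree_except n G u v + of_bool (G (min u v, max u v))"
proof -
  let ?S = "{w. w < n \<and> w \<noteq> v \<and> adj G w u}"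
  have "finite ?S" by (rule finite_subset[of _ "{..<n}"]) auto
  moreover have "{w. w < n \<and> adj G w u} = (if G (min u v, max u v) then insert v ?S else ?S)"
    using assms by (auto simp: adj_def min_def max_def)
  ultimately show ?thesis by (simp add: degree_def degree_except_def)
qed

lemma depends_only_on_degree_except:
  assumes "u < n"
  shows "depends_only_on (edges_at_except n u v) (\<lambda>G. P (degree_except n G u v))"
  unfolding depends_only_on_def
proof (intro allI impI)
  fix G H :: "nat \<times> nat \<Rightarrow> bool"
  assume agree: "\<forall>e\<in>edges_at_except n u v. G e = H e"
  have "adj G w u = adj H w u" if "w < n" "w \<noteq> v" for w
  proof (cases "w = u")
    case False
    then have "(min w u, max w u) \<in> edges_at_except n u v"
      using that assms by (auto simp: edges_at_except_def gnp_edges_def min_def max_def)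
    then show ?thesis using agree by (simp add: adj_def)
  qed (simp add: adj_def)
  then have "{w. w < n \<and> w \<noteq> v \<and> adj G w u} = {w. w < n \<and> w \<noteq> v \<and> adj H w u}" by auto
  then show "P (degree_except n G u v) = P (degree_except n H u v)" by (simp add: degree_except_def)
qed

lemma prob_degree_le_edge_cases:
  assumes "0 \<le> p" "p \<le> 1" "u \<noteq> v" "u < n" "v < n"
  shows "measure_pmf.prob (gnp n p) {G. int (degree n G u) \<le> k}
       = p * measure_pmf.prob (gnp n p) {G. int (degree_except n G u v) \<le> k - 1}
         + (1 - p) * measure_pmf.prob (gnp n p) {G. int (degree_except n G u v) \<le> k}"
proof -
  let ?e = "(min u v, max u v)"
  have dep: "depends_only_on (edges_at_except n u v) (\<lambda>G. int (degree_except n G u v) \<le> j)" for j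
    using depends_only_on_degree_except[of u n v "\<lambda>d. int d \<le> j"] assms by simp
  have "measure_pmf.prob (gnp n p) {G. int (degree n G u) \<le> k}
      = measure_pmf.prob (gnp n p)
          {G. (G ?e \<and> int (degree_except n G u v) \<le> k - 1) \<or> (\<not> G ?e \<and> int (degree_except n G u v) \<le> k)}"
    using degree_eq_degree_except[of u v n] assms by (intro arg_cong[where f = "measure _"]) auto
  also have "\<dots>
      = p * measure_pmf.prob (gnp n p) {G. int (degree_except n G u v) \<le> k - 1}
        + (1 - p) * measure_pmf.prob (gnp n p) {G. int (degree_except n G u v) \<le> k}"
    by (rule prob_gnp_edge_cases[OF _ _ _ edges_at_except_subset edge_notin_edges_at_except(1) dep dep])
      (use assms in \<open>simp_all add: edge_in_gnp_edges\<close>)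
  finally show ?thesis .
qed

lemma prob_two_degrees_le_edge_cases:
  assumes "0 \<le> p" "p \<le> 1" "u \<noteq> v" "u < n" "v < n"
  shows "measure_pmf.prob (gnp n p) {G. int (degree n G u) \<le> k \<and> int (degree n G v) \<le> k}
       = p * (measure_pmf.prob (gnp n p) {G. int (degree_except n G u v) \<le> k - 1}
              * measure_pmf.prob (gnp n p) {G. int (degree_except n G v u) \<le> k - 1})
         + (1 - p) * (measure_pmf.prob (gnp n p) {G. int (degree_except n G u v) \<le> k}
              * measure_pmf.prob (gnp n p) {G. int (degree_except n G v u) \<le> k})"
proof -
  let ?P = "measure_pmf.prob (gnp n p)"
  let ?e = "(min u v, max u v)"
  let ?D = "edges_at_except n u v \<union> edges_at_except n v u"
  have e_sym: "(min v u, max v u) = ?e" by (simp add: min.commute max.commute)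
  have du: "degree n G u = degree_except n G u v + of_bool (G ?e)" for G
    using degree_eq_degree_except[of u v n G] assms by simp
  have dv: "degree n G v = degree_except n G v u + of_bool (G ?e)" for G
    using degree_eq_degree_except[of v u n G] assms e_sym by simp
  have dep_u: "depends_only_on (edges_at_except n u v) (\<lambda>G. int (degree_except n G u v) \<le> j)" for j
    using depends_only_on_degree_except[of u n v "\<lambda>d. int d \<le> j"] assms by simp
  have dep_v: "depends_only_on (edges_at_except n v u) (\<lambda>G. int (degree_except n G v u) \<le> j)" for j
    using depends_only_on_degree_except[of v n u "\<lambda>d. int d \<le> j"] assms by simp
  have dep: "depends_only_on ?D (\<lambda>G. int (degree_except n G u v) \<le> j \<and> int (degree_except n G v u) \<le> j)"
    for j by (rule depends_only_on_conj[OF dep_u dep_v])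
  have indep: "?P {G. int (degree_except n G u v) \<le> j \<and> int (degree_except n G v u) \<le> j}
      = ?P {G. int (degree_except n G u v) \<le> j} * ?P {G. int (degree_except n G v u) \<le> j}" for j
    by (rule prob_gnp_indep[OF edges_at_except_subset edges_at_except_subset
          edges_at_except_disjoint[OF assms(3)] dep_u dep_v])
  have "?P {G. int (degree n G u) \<le> k \<and> int (degree n G v) \<le> k}
      = ?P {G. (G ?e \<and> (int (degree_except n G u v) \<le> k - 1 \<and> int (degree_except n G v u) \<le> k - 1))
          \<or> (\<not> G ?e \<and> (int (degree_except n G u v) \<le> k \<and> int (degree_except n G v u) \<le> k))}"
    by (rule arg_cong[where f = ?P]) (auto simp: du dv)
  also have "\<dots>
      = p * ?P {G. int (degree_except n G u v) \<le> k - 1 \<and> int (degree_except n G v u) \<le> k - 1}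
        + (1 - p) * ?P {G. int (degree_except n G u v) \<le> k \<and> int (degree_except n G v u) \<le> k}"
    by (rule prob_gnp_edge_cases[OF _ _ _ _ _ dep dep])
      (use assms edge_notin_edges_at_except in \<open>auto simp: edge_in_gnp_edges edges_at_except_subset\<close>)
  finally show ?thesis by (simp only: indep)
qed

lemma mixture_product_ge:
  fixes p a b c d :: real
  assumes "0 \<le> p" "p \<le> 1" "0 \<le> b" "b \<le> a" "0 \<le> d" "d \<le> c"
  shows "(1 - p) * (p * (b * d) + (1 - p) * (a * c)) \<le> (p * b + (1 - p) * a) * (p * d + (1 - p) * c)"
proof -
  have "0 \<le> b * (c - d) + a * d" using assms by simp
  then have "0 \<le> p * p * (b * d) + p * (1 - p) * (b * (c - d) + a * d)" using assms by simp
  moreover have "(p * b + (1 - p) * a) * (p * d + (1 - p) * c) - (1 - p) * (p * (b * d) + (1 - p) * (a * c))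
      = p * p * (b * d) + p * (1 - p) * (b * (c - d) + a * d)"
    by (simp add: algebra_simps)
  ultimately show ?thesis by linarith
qed

lemma prob_two_low_degrees_le:
  assumes "0 \<le> p" "p < 1" "u \<noteq> v" "u < n" "v < n"
  shows "measure_pmf.prob (gnp n p) {G. int (degree n G u) \<le> k \<and> int (degree n G v) \<le> k}
    \<le> measure_pmf.prob (gnp n p) {G. int (degree n G u) \<le> k}
       * measure_pmf.prob (gnp n p) {G. int (degree n G v) \<le> k} / (1 - p)"
proof -
  let ?P = "measure_pmf.prob (gnp n p)"
  define a where "a = ?P {G. int (degree_except n G u v) \<le> k}"
  define b where "b = ?P {G. int (degree_except n G u v) \<le> k - 1}"
  define c where "c = ?P {G. int (degree_except n G v u) \<le> k}"
  define d where "d = ?P {G. int (degree_except n G v u) \<le> k - 1}"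
  have Pu: "?P {G. int (degree n G u) \<le> k} = p * b + (1 - p) * a"
    unfolding a_def b_def by (rule prob_degree_le_edge_cases) (use assms in auto)
  have Pv: "?P {G. int (degree n G v) \<le> k} = p * d + (1 - p) * c"
    unfolding c_def d_def by (rule prob_degree_le_edge_cases) (use assms in auto)
  have Puv: "?P {G. int (degree n G u) \<le> k \<and> int (degree n G v) \<le> k} = p * (b * d) + (1 - p) * (a * c)"
    unfolding a_def b_def c_def d_def by (rule prob_two_degrees_le_edge_cases) (use assms in auto)
  have "b \<le> a" "d \<le> c"
    unfolding a_def b_def c_def d_def by (auto intro: measure_pmf.finite_measure_mono)
  then have "(1 - p) * (p * (b * d) + (1 - p) * (a * c)) \<le> (p * b + (1 - p) * a) * (p * d + (1 - p) * c)"
    using assms by (intro mixture_product_ge) (auto simp: b_def d_def)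
  then show ?thesis
    unfolding Pu Pv Puv using assms by (simp add: pos_le_divide_eq mult.commute)
qed

lemma variance_card_events_le:
  fixes M :: "'a pmf" and A :: "'i \<Rightarrow> 'a \<Rightarrow> bool" and c :: real
  assumes "finite I" "0 \<le> c"
    and pair_le: "\<And>u v. u \<in> I \<Longrightarrow> v \<in> I \<Longrightarrow> u \<noteq> v \<Longrightarrow>
      measure_pmf.prob M {x. A u x \<and> A v x}
        \<le> c * measure_pmf.prob M {x. A u x} * measure_pmf.prob M {x. A v x}"
  defines "E \<equiv> measure_pmf.expectation M (\<lambda>x. real (card {i \<in> I. A i x}))"
  shows "measure_pmf.variance M (\<lambda>x. real (card {i \<in> I. A i x})) \<le> (c - 1) * E\<^sup>2 + E"
proof -
  let ?P = "measure_pmf.prob M"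
  let ?X = "\<lambda>x. real (card {i \<in> I. A i x})"
  have X: "?X x = (\<Sum>i\<in>I. indicator {x. A i x} x)" for x
    using assms(1) by (simp add: indicator_def sum.If_cases Int_def)
  have X2: "(?X x)\<^sup>2 = (\<Sum>u\<in>I. \<Sum>v\<in>I. indicator {x. A u x \<and> A v x} x)" for x
    unfolding X power2_eq_square sum_product by (intro sum.cong refl) (simp add: indicator_def)
  have integrable_X: "integrable M ?X"
    unfolding X by (simp add: measure_pmf.emeasure_eq_measure)
  have integrable_X2: "integrable M (\<lambda>x. (?X x)\<^sup>2)"
    unfolding X2 by (simp add: measure_pmf.emeasure_eq_measure)
  have E: "E = (\<Sum>i\<in>I. ?P {x. A i x})"
    unfolding E_def X by (simp add: Bochner_Integration.integral_sum measure_pmf.emeasure_eq_measure)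
  have EX2: "measure_pmf.expectation M (\<lambda>x. (?X x)\<^sup>2) = (\<Sum>u\<in>I. \<Sum>v\<in>I. ?P {x. A u x \<and> A v x})"
    unfolding X2 by (simp add: Bochner_Integration.integral_sum measure_pmf.emeasure_eq_measure)
  have "(\<Sum>u\<in>I. \<Sum>v\<in>I. ?P {x. A u x \<and> A v x})
      \<le> (\<Sum>u\<in>I. \<Sum>v\<in>I. c * ?P {x. A u x} * ?P {x. A v x} + (if u = v then ?P {x. A v x} else 0))"
  proof (intro sum_mono)
    fix u v assume "u \<in> I" "v \<in> I"
    show "?P {x. A u x \<and> A v x} \<le> c * ?P {x. A u x} * ?P {x. A v x} + (if u = v then ?P {x. A v x} else 0)"
      using pair_le[OF \<open>u \<in> I\<close> \<open>v \<in> I\<close>] \<open>0 \<le> c\<close> by (cases "u = v") auto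
  qed
  also have "\<dots> = c * E\<^sup>2 + E"
  proof -
    have "(\<Sum>u\<in>I. \<Sum>v\<in>I. c * ?P {x. A u x} * ?P {x. A v x}) = c * E\<^sup>2"
      unfolding E by (simp add: power2_eq_square sum_distrib_left sum_distrib_right ac_simps)
    moreover have "(\<Sum>u\<in>I. \<Sum>v\<in>I. if u = v then ?P {x. A v x} else 0) = E"
      using assms(1) by (simp add: E)
    ultimately show ?thesis by (simp add: sum.distrib)
  qed
  finally have "measure_pmf.expectation M (\<lambda>x. (?X x)\<^sup>2) \<le> c * E\<^sup>2 + E"
    unfolding EX2 .
  moreover have "measure_pmf.variance M ?X = measure_pmf.expectation M (\<lambda>x. (?X x)\<^sup>2) - E\<^sup>2"
    unfolding E_def by (rule measure_pmf.variance_eq) (fact integrable_X integrable_X2)+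
  ultimately show ?thesis by (simp add: algebra_simps)
qed

theorem lemma4p6:
  fixes n :: nat and p :: real and k :: int
  assumes "0 \<le> p" and "p < 1"
  defines "EY \<equiv> measure_pmf.expectation (gnp n p) (num_low_deg n k)"
  shows "measure_pmf.variance (gnp n p) (num_low_deg n k) \<le> EY ^ 2 * (p / (1 - p) + 1 / EY)"
proof -
  have Y: "num_low_deg n k = (\<lambda>G. real (card {v \<in> {..<n}. int (degree n G v) \<le> k}))"
    by (simp add: num_low_deg_def fun_eq_iff)
  have "measure_pmf.variance (gnp n p) (num_low_deg n k) \<le> (1 / (1 - p) - 1) * EY\<^sup>2 + EY"
    unfolding EY_def Y
    by (rule variance_card_events_le)
      (use assms prob_two_low_degrees_le in \<open>auto simp: mult.commute\<close>)
  also have "(1 / (1 - p) - 1) * EY\<^sup>2 + EY = EY ^ 2 * (p / (1 - p) + 1 / EY)"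
  proof -
    have "1 / (1 - p) - 1 = p / (1 - p)" using assms by (simp add: field_simps)
    moreover have "EY\<^sup>2 * (1 / EY) = EY" \<comment> \<open>also when \<open>EY = 0\<close>, as \<open>1 / 0 = 0\<close>\<close>
      by (simp add: power2_eq_square)
    ultimately show ?thesis by (simp add: distrib_left mult.commute)
  qed
  finally show ?thesis .
qed

end
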